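(* Let $H$ be a finite group, $N$ a normal subgroup of $H$, and let $M_1, \dots, M_k$ be maximal subgroups of $H$ in general position. Then the $M_i$ can be reindexed and an integer $l$ with $0 \le l \le k$ chosen so that $\{M_1 \cap N, \dots, M_l \cap N\}$ is in general position and, for every $j > l$, $M_j \cap N \supseteq \bigcap_{1 \leq i \leq l} (M_i \cap N)$. Moreover, for such an arrangement, if $\pi : H \to H/N$ is the projection and $R = \bigcap_{1 \le i \le l} M_i$, then the subgroups $\pi(R \cap M_j)$, $l < j \le k$, of $H/N$ are in general position.
   Context: All groups are finite. A finite set $\{H_1,\dots,H_n\}$ of subgroups of a group $G$ is in general position if for every $1 \le j \le n$, $\bigcap_{i \neq j} H_i \supsetneq \bigcap_{i} H_i$. *)

theory Defs
  imports "HOL-Algebra.Algebra"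
begin

definition maximal_subgroup :: "'a set \<Rightarrow> ('a, 'b) monoid_scheme \<Rightarrow> bool" where
  "maximal_subgroup M G \<longleftrightarrow> subgroup M G \<and> M \<noteq> carrier G \<and>
     (\<forall>K. subgroup K G \<and> M \<subseteq> K \<longrightarrow> K = M \<or> K = carrier G)"

text \<open>General position of the indexed family S i, i in I, of subgroups of a group with
  carrier A (intersections taken inside A, so the empty intersection is A):
  for every j in I, the intersection over I - {j} strictly contains the full intersection.\<close>
definition gen_pos_in :: "'a set \<Rightarrow> 'i set \<Rightarrow> ('i \<Rightarrow> 'a set) \<Rightarrow> bool" where
  "gen_pos_in A I S \<longleftrightarrow>
     (\<forall>j\<in>I. A \<inter> (\<Inter>i\<in>I - {j}. S i) \<supset> A \<inter> (\<Inter>i\<in>I. S i))"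

end

theory Submission
  imports Defs
begin

text \<open>Among the subsets of the index set with the same intersection with N as the
  whole family, take one of least cardinality; minimality is exactly general position, and
  listing this subset first gives the arrangement. For the quotient, general position of the
  M_i in H supplies, for each j > l, an element a lying in every M_i except M_j; in particular
  a \<in> R. Its coset N a lies in every \<pi>(R \<inter> M_i), i \<noteq> j, but not in \<pi>(R \<inter> M_j): if N a = N b with
  b \<in> R \<inter> M_j, then a b\<inverse> \<in> N \<inter> R \<subseteq> M_j, forcing a \<in> M_j.\<close>

lemma gen_pos_in_iff_witness:
  "gen_pos_in A I S \<longleftrightarrow> (\<forall>j\<in>I. \<exists>a\<in>A. (\<forall>i\<in>I - {j}. a \<in> S i) \<and> a \<notin> S j)"
  unfolding gen_pos_in_def
proof (rule ball_cong[OF refl])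
  fix j assume "j \<in> I"
  let ?X = "A \<inter> (\<Inter>i\<in>I - {j}. S i)"
  have mem: "a \<in> A \<inter> (\<Inter>i\<in>I. S i) \<longleftrightarrow> a \<in> ?X \<and> a \<in> S j" for a
    using \<open>j \<in> I\<close> by blast
  have X: "a \<in> ?X \<longleftrightarrow> a \<in> A \<and> (\<forall>i\<in>I - {j}. a \<in> S i)" for a
    by blast
  show "?X \<supset> A \<inter> (\<Inter>i\<in>I. S i) \<longleftrightarrow> (\<exists>a\<in>A. (\<forall>i\<in>I - {j}. a \<in> S i) \<and> a \<notin> S j)"
  proof
    assume "?X \<supset> A \<inter> (\<Inter>i\<in>I. S i)"
    then obtain a where "a \<in> ?X" "a \<notin> A \<inter> (\<Inter>i\<in>I. S i)"
      by (meson psubset_imp_ex_mem DiffE)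
    then show "\<exists>a\<in>A. (\<forall>i\<in>I - {j}. a \<in> S i) \<and> a \<notin> S j"
      unfolding mem X by blast
  next
    assume "\<exists>a\<in>A. (\<forall>i\<in>I - {j}. a \<in> S i) \<and> a \<notin> S j"
    then obtain a where "a \<in> ?X" "a \<notin> S j"
      unfolding X by blast
    then have "a \<notin> A \<inter> (\<Inter>i\<in>I. S i)"
      unfolding mem by blast
    moreover have "A \<inter> (\<Inter>i\<in>I. S i) \<subseteq> ?X"
      using mem by blast
    ultimately show "?X \<supset> A \<inter> (\<Inter>i\<in>I. S i)"
      using \<open>a \<in> ?X\<close> by blast
  qed
qed

lemma gen_pos_in_Int_carrier:
  "gen_pos_in A I (\<lambda>i. S i \<inter> A) \<longleftrightarrow> gen_pos_in A I S"
proof -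
  have Int_A: "A \<inter> (\<Inter>i\<in>J. S i \<inter> A) = A \<inter> (\<Inter>i\<in>J. S i)" for J
    by blast
  show ?thesis
    unfolding gen_pos_in_def by (simp only: Int_A)
qed

lemma gen_pos_in_reindex:
  assumes "inj_on \<sigma> I"
  shows "gen_pos_in A I (\<lambda>i. S (\<sigma> i)) \<longleftrightarrow> gen_pos_in A (\<sigma> ` I) S"
proof -
  have "(\<forall>i\<in>I - {j}. a \<in> S (\<sigma> i)) \<longleftrightarrow> (\<forall>y\<in>\<sigma> ` I - {\<sigma> j}. a \<in> S y)" if "j \<in> I" for j a
    using inj_on_image_set_diff[OF assms, of I "{j}"] that by auto
  then have witness_iff: "(\<exists>a\<in>A. (\<forall>i\<in>I - {j}. a \<in> S (\<sigma> i)) \<and> a \<notin> S (\<sigma> j)) \<longleftrightarrow>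
      (\<exists>a\<in>A. (\<forall>y\<in>\<sigma> ` I - {\<sigma> j}. a \<in> S y) \<and> a \<notin> S (\<sigma> j))" if "j \<in> I" for j
    using that by blast
  show ?thesis
    unfolding gen_pos_in_iff_witness
  proof
    assume "\<forall>j\<in>I. \<exists>a\<in>A. (\<forall>i\<in>I - {j}. a \<in> S (\<sigma> i)) \<and> a \<notin> S (\<sigma> j)"
    then show "\<forall>x\<in>\<sigma> ` I. \<exists>a\<in>A. (\<forall>y\<in>\<sigma> ` I - {x}. a \<in> S y) \<and> a \<notin> S x"
      using witness_iff by blast
  next
    assume "\<forall>x\<in>\<sigma> ` I. \<exists>a\<in>A. (\<forall>y\<in>\<sigma> ` I - {x}. a \<in> S y) \<and> a \<notin> S x"
    then show "\<forall>j\<in>I. \<exists>a\<in>A. (\<forall>i\<in>I - {j}. a \<in> S (\<sigma> i)) \<and> a \<notin> S (\<sigma> j)"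
      using witness_iff by blast
  qed
qed

lemma ex_gen_pos_in_subfamily:
  assumes "finite I"
  shows "\<exists>J\<subseteq>I. gen_pos_in A J S \<and> A \<inter> (\<Inter>i\<in>J. S i) = A \<inter> (\<Inter>i\<in>I. S i)"
proof -
  define P where "P J \<longleftrightarrow> J \<subseteq> I \<and> A \<inter> (\<Inter>i\<in>J. S i) = A \<inter> (\<Inter>i\<in>I. S i)" for J
  obtain J where PJ: "P J" and least: "\<And>J'. P J' \<Longrightarrow> card J \<le> card J'"
    using ex_has_least_nat[of P I card] by (auto simp: P_def)
  have "finite J"
    using PJ assms finite_subset unfolding P_def by blast
  have "gen_pos_in A J S"
    unfolding gen_pos_in_def
  proof
    fix j assume "j \<in> J"
    show "A \<inter> (\<Inter>i\<in>J - {j}. S i) \<supset> A \<inter> (\<Inter>i\<in>J. S i)"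
    proof (rule ccontr)
      assume "\<not> ?thesis"
      then have "A \<inter> (\<Inter>i\<in>J - {j}. S i) = A \<inter> (\<Inter>i\<in>J. S i)"
        by blast
      then have "P (J - {j})"
        using PJ unfolding P_def by auto
      then show False
        using least card_Diff1_less[OF \<open>finite J\<close> \<open>j \<in> J\<close>] by fastforce
    qed
  qed
  then show ?thesis
    using PJ unfolding P_def by blast
qed

lemma ex_bij_lessThan_onto_prefix:
  fixes S :: "nat set"
  assumes "S \<subseteq> {..<k}"
  shows "\<exists>\<sigma>. bij_betw \<sigma> {..<k} {..<k} \<and> \<sigma> ` {..<card S} = S"
proof -
  let ?T = "{..<k} - S"
  have "finite S"
    using assms finite_subset by blast
  have card_le: "card S \<le> k"
    using assms by (metis card_lessThan card_mono finite_lessThan)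
  obtain f where f: "bij_betw f {..<card S} S"
    using \<open>finite S\<close> by (metis bij_betw_inv ex_bij_betw_finite_nat lessThan_atLeast0)
  obtain g where g: "bij_betw g {..<card ?T} ?T"
    by (metis bij_betw_inv ex_bij_betw_finite_nat lessThan_atLeast0 finite_Diff finite_lessThan)
  define \<sigma> where "\<sigma> i = (if i < card S then f i else g (i - card S))" for i
  have bij_S: "bij_betw \<sigma> {..<card S} S"
    using f by (rule bij_betw_cong[THEN iffD1, rotated]) (simp add: \<sigma>_def)
  have "bij_betw (\<lambda>i. i - card S) {card S..<k} {..<card ?T}"
    using assms \<open>finite S\<close> card_le
    by (intro bij_betw_byWitness[where f'="\<lambda>i. i + card S"]) (auto simp: card_Diff_subset)
  then have "bij_betw (g \<circ> (\<lambda>i. i - card S)) {card S..<k} ?T"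
    using g by (rule bij_betw_trans)
  then have bij_T: "bij_betw \<sigma> {card S..<k} ?T"
    by (rule bij_betw_cong[THEN iffD1, rotated]) (simp add: \<sigma>_def)
  have "bij_betw \<sigma> ({..<card S} \<union> {card S..<k}) (S \<union> ?T)"
    by (rule bij_betw_combine[OF bij_S bij_T]) blast
  moreover have "{..<card S} \<union> {card S..<k} = {..<k}" "S \<union> ?T = {..<k}"
    using card_le assms by auto
  ultimately show ?thesis
    using bij_S by (metis bij_betw_imp_surj_on)
qed

lemma ex_permutation_gen_pos_in_prefix:
  fixes S :: "nat \<Rightarrow> 'a set"
  shows "\<exists>\<sigma> l. bij_betw \<sigma> {..<k} {..<k} \<and> l \<le> k \<and> gen_pos_in A {..<l} (\<lambda>i. S (\<sigma> i)) \<and>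
    A \<inter> (\<Inter>i<l. S (\<sigma> i)) = A \<inter> (\<Inter>i<k. S i)"
proof -
  obtain J where J: "J \<subseteq> {..<k}" "gen_pos_in A J S" "A \<inter> (\<Inter>i\<in>J. S i) = A \<inter> (\<Inter>i<k. S i)"
    using ex_gen_pos_in_subfamily[of "{..<k}" A S] by auto
  obtain \<sigma> where \<sigma>: "bij_betw \<sigma> {..<k} {..<k}" and prefix: "\<sigma> ` {..<card J} = J"
    using ex_bij_lessThan_onto_prefix[OF J(1)] by blast
  have "card J \<le> k"
    using J(1) by (metis card_lessThan card_mono finite_lessThan)
  then have inj: "inj_on \<sigma> {..<card J}"
    using \<sigma> by (auto simp: bij_betw_def intro: inj_on_subset)
  have "gen_pos_in A {..<card J} (\<lambda>i. S (\<sigma> i))"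
    unfolding gen_pos_in_reindex[OF inj] prefix by (fact J(2))
  moreover have "A \<inter> (\<Inter>i<card J. S (\<sigma> i)) = A \<inter> (\<Inter>i\<in>\<sigma> ` {..<card J}. S i)"
    by (simp add: image_image)
  then have "A \<inter> (\<Inter>i<card J. S (\<sigma> i)) = A \<inter> (\<Inter>i<k. S i)"
    unfolding prefix J(3) .
  ultimately show ?thesis
    using \<sigma> \<open>card J \<le> k\<close> by (intro exI[of _ \<sigma>] exI[of _ "card J"]) blast
qed

lemma (in group) subgroup_carrier_Inter:
  assumes "\<And>i. i \<in> I \<Longrightarrow> subgroup (M i) G"
  shows "subgroup (carrier G \<inter> (\<Inter>i\<in>I. M i)) G"
proof -
  have "subgroup (\<Inter>(insert (carrier G) (M ` I))) G"
    using assms by (intro subgroups_Inter) (auto intro: subgroup_self)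
  then show ?thesis
    by simp
qed

lemma (in group) rcos_eq_imp_mem_subgroup:
  assumes "subgroup N G" "subgroup R G" "subgroup K G" "N \<inter> R \<subseteq> K"
    and "a \<in> R" "b \<in> R \<inter> K" "N #> a = N #> b"
  shows "a \<in> K"
proof -
  have a: "a \<in> carrier G" and b: "b \<in> carrier G"
    using subgroup.mem_carrier[OF assms(2)] assms(5,6) by auto
  have "a \<in> N #> b"
    using rcos_self[OF a assms(1)] unfolding assms(7) .
  then obtain n where "n \<in> N" and a_eq: "a = n \<otimes> b"
    unfolding r_coset_def by (rule UN_E) simp
  then have "n = a \<otimes> inv b"
    using subgroup.mem_carrier[OF assms(1)] b by (simp add: m_assoc)
  then have "n \<in> R"
    using assms(2,5,6) by (simp add: subgroup.m_closed subgroup.m_inv_closed)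
  with \<open>n \<in> N\<close> assms(4) have "n \<in> K"
    by blast
  then show ?thesis
    unfolding a_eq using assms(3,6) by (simp add: subgroup.m_closed)
qed

lemma (in group) gen_pos_in_Mod_image:
  assumes N: "subgroup N G"
    and M: "\<And>i. i \<in> I \<Longrightarrow> subgroup (M i) G"
    and gp: "gen_pos_in (carrier G) I M"
    and "L \<subseteq> I"
    and R_def: "R = carrier G \<inter> (\<Inter>i\<in>L. M i)"
    and NR: "\<And>j. j \<in> I - L \<Longrightarrow> N \<inter> R \<subseteq> M j"
  shows "gen_pos_in (carrier (G Mod N)) (I - L) (\<lambda>j. (\<lambda>h. N #> h) ` (R \<inter> M j))"
  unfolding gen_pos_in_iff_witness
proof
  fix j assume j: "j \<in> I - L"
  obtain a where a: "a \<in> carrier G" and a_in: "\<And>i. i \<in> I - {j} \<Longrightarrow> a \<in> M i"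
    and "a \<notin> M j"
    using gp j unfolding gen_pos_in_iff_witness by blast
  have "a \<in> R"
    using R_def a a_in j \<open>L \<subseteq> I\<close> by blast
  have "subgroup R G"
    unfolding R_def using M \<open>L \<subseteq> I\<close> by (blast intro: subgroup_carrier_Inter)
  have "N #> a \<notin> (\<lambda>h. N #> h) ` (R \<inter> M j)"
    using rcos_eq_imp_mem_subgroup[OF N \<open>subgroup R G\<close> M NR \<open>a \<in> R\<close>] j \<open>a \<notin> M j\<close> by auto
  moreover have "N #> a \<in> carrier (G Mod N)"
    using a unfolding FactGroup_def RCOSETS_def by auto
  moreover have "\<forall>i\<in>I - L - {j}. N #> a \<in> (\<lambda>h. N #> h) ` (R \<inter> M i)"
    using \<open>a \<in> R\<close> a_in by blast
  ultimately show "\<exists>x\<in>carrier (G Mod N). (\<forall>i\<in>I - L - {j}. x \<in> (\<lambda>h. N #> h) ` (R \<inter> M i))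
      \<and> x \<notin> (\<lambda>h. N #> h) ` (R \<inter> M j)"
    by blast
qed

theorem lemma2p5:
  fixes H :: "('a, 'b) monoid_scheme" and N :: "'a set"
    and M :: "nat \<Rightarrow> 'a set" and k :: nat
  assumes "group H" and "finite (carrier H)" and "N \<lhd> H"
    and "\<forall>i<k. maximal_subgroup (M i) H"
    and "gen_pos_in (carrier H) {..<k} M"
  shows "(\<exists>\<sigma> l. bij_betw \<sigma> {..<k} {..<k} \<and> l \<le> k \<and>
            gen_pos_in N {..<l} (\<lambda>i. M (\<sigma> i) \<inter> N) \<and>
            (\<forall>j\<in>{l..<k}. N \<inter> (\<Inter>i<l. M (\<sigma> i) \<inter> N) \<subseteq> M (\<sigma> j) \<inter> N))
       \<and> (\<forall>\<sigma> l. bij_betw \<sigma> {..<k} {..<k} \<and> l \<le> k \<and>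
            gen_pos_in N {..<l} (\<lambda>i. M (\<sigma> i) \<inter> N) \<and>
            (\<forall>j\<in>{l..<k}. N \<inter> (\<Inter>i<l. M (\<sigma> i) \<inter> N) \<subseteq> M (\<sigma> j) \<inter> N)
          \<longrightarrow> (let R = carrier H \<inter> (\<Inter>i<l. M (\<sigma> i)) in
               gen_pos_in (carrier (H Mod N)) {l..<k}
                 (\<lambda>j. (\<lambda>h. N #>\<^bsub>H\<^esub> h) ` (R \<inter> M (\<sigma> j)))))"
proof (intro conjI allI impI)
  obtain \<sigma> l where \<sigma>: "bij_betw \<sigma> {..<k} {..<k}" and "l \<le> k"
    and gen_pos: "gen_pos_in N {..<l} (\<lambda>i. M (\<sigma> i))"
    and same_Inter: "N \<inter> (\<Inter>i<l. M (\<sigma> i)) = N \<inter> (\<Inter>i<k. M i)"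
    using ex_permutation_gen_pos_in_prefix[of k N M] by blast
  have "N \<inter> (\<Inter>i<l. M (\<sigma> i) \<inter> N) \<subseteq> M (\<sigma> j) \<inter> N" if "j \<in> {l..<k}" for j
  proof -
    have "\<sigma> j < k"
      using bij_betwE[OF \<sigma>] that by auto
    moreover have "N \<inter> (\<Inter>i<l. M (\<sigma> i) \<inter> N) = N \<inter> (\<Inter>i<k. M i)"
      unfolding same_Inter[symmetric] by blast
    ultimately show ?thesis
      by blast
  qed
  moreover have "gen_pos_in N {..<l} (\<lambda>i. M (\<sigma> i) \<inter> N)"
    unfolding gen_pos_in_Int_carrier by (fact gen_pos)
  ultimately show "\<exists>\<sigma> l. bij_betw \<sigma> {..<k} {..<k} \<and> l \<le> k \<and>
      gen_pos_in N {..<l} (\<lambda>i. M (\<sigma> i) \<inter> N) \<and>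
      (\<forall>j\<in>{l..<k}. N \<inter> (\<Inter>i<l. M (\<sigma> i) \<inter> N) \<subseteq> M (\<sigma> j) \<inter> N)"
    using \<sigma> \<open>l \<le> k\<close> by (intro exI[of _ \<sigma>] exI[of _ l]) blast
next
  fix \<sigma> l
  assume "bij_betw \<sigma> {..<k} {..<k} \<and> l \<le> k \<and>
      gen_pos_in N {..<l} (\<lambda>i. M (\<sigma> i) \<inter> N) \<and>
      (\<forall>j\<in>{l..<k}. N \<inter> (\<Inter>i<l. M (\<sigma> i) \<inter> N) \<subseteq> M (\<sigma> j) \<inter> N)"
  then have \<sigma>: "bij_betw \<sigma> {..<k} {..<k}" and "l \<le> k"
    and above: "\<And>j. j \<in> {l..<k} \<Longrightarrow> N \<inter> (\<Inter>i<l. M (\<sigma> i) \<inter> N) \<subseteq> M (\<sigma> j) \<inter> N"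
    by auto
  interpret group H by fact
  define R where "R = carrier H \<inter> (\<Inter>i<l. M (\<sigma> i))"
  have subgroups: "subgroup (M (\<sigma> i)) H" if "i \<in> {..<k}" for i
    using assms(4) bij_betwE[OF \<sigma>] that by (simp add: maximal_subgroup_def)
  have "gen_pos_in (carrier H) {..<k} (\<lambda>i. M (\<sigma> i))"
    using assms(5) \<sigma> by (simp add: bij_betw_def gen_pos_in_reindex[of \<sigma> "{..<k}"])
  moreover have "{..<l} \<subseteq> {..<k}"
    using \<open>l \<le> k\<close> by auto
  moreover have "N \<inter> R \<subseteq> M (\<sigma> j)" if "j \<in> {..<k} - {..<l}" for j
    using above[of j] that unfolding R_def by auto
  ultimately have "gen_pos_in (carrier (H Mod N)) ({..<k} - {..<l})
      (\<lambda>j. (\<lambda>h. N #>\<^bsub>H\<^esub> h) ` (R \<inter> M (\<sigma> j)))"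
    using gen_pos_in_Mod_image[where M = "\<lambda>i. M (\<sigma> i)",
        OF normal_imp_subgroup[OF assms(3)] subgroups _ _ R_def]
    by blast
  then show "let R = carrier H \<inter> (\<Inter>i<l. M (\<sigma> i)) in
      gen_pos_in (carrier (H Mod N)) {l..<k} (\<lambda>j. (\<lambda>h. N #>\<^bsub>H\<^esub> h) ` (R \<inter> M (\<sigma> j)))"
    unfolding lessThan_minus_lessThan Let_def R_def .
qed

end
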